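(* Let $m,n\in\mathbb{N}$ and $\epsilon>0$. Let $\alpha\in\mathbb{Z}_n$ and $f=\chi_\alpha:\mathbb{Z}_n\to\mathbb{C}$. Let $\ell:=\min(n,m)$ and let $g:\mathbb{Z}_m\to\mathbb{C}$ be defined by $g(x)=f(x)$ for $0\le x<\ell$ and $g(x)=0$ otherwise. Let $r=1/(2\epsilon)$ and $\Gamma'=\{\beta\in\mathbb{Z}_m: |\frac mn\alpha-\beta|_m\le r+1\}$. Then $\|g-g|_{\Gamma'}\|_2^2\le\epsilon$.
   Context: $\mathbb{Z}_n=\{0,\dots,n-1\}$ with addition mod $n$; elements are treated as these integer representatives. $\chi_{\alpha}(x)=\exp(2\pi i\alpha x/n)$ on $\mathbb{Z}_n$, and $\chi_{\beta,m}(x)=\exp(2\pi i\beta x/m)$ on $\mathbb{Z}_m$. On $\mathbb{Z}_m$: $\langle h_1,h_2\rangle=\frac1m\sum_x h_1(x)\overline{h_2(x)}$, $\|h\|_2^2=\langle h,h\rangle$, $\widehat h(\beta)=\langle h,\chi_{\beta,m}\rangle$, and for $\Gamma'\subseteq\mathbb{Z}_m$, $h|_{\Gamma'}=\sum_{\beta\in\Gamma'}\widehat h(\beta)\chi_{\beta,m}$. For $k\in\mathbb{N}$, $x\in\mathbb{R}$: $|x|_k=\min\{|x-kz|:z\in\mathbb{Z}\}$. *)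

theory Defs
  imports Complex_Main
begin

text \<open>Z_k is modelled by the representatives {0..<k} (as nat); functions on Z_k are
  functions nat \<Rightarrow> complex of which only the values on {0..<k} matter.\<close>

definition chi :: "nat \<Rightarrow> nat \<Rightarrow> nat \<Rightarrow> complex" where
  "chi k a x = exp (2 * pi * \<i> * of_nat a * of_nat x / of_nat k)"

definition zinner :: "nat \<Rightarrow> (nat \<Rightarrow> complex) \<Rightarrow> (nat \<Rightarrow> complex) \<Rightarrow> complex" where
  "zinner k h1 h2 = (1 / of_nat k) * (\<Sum>x<k. h1 x * cnj (h2 x))"

definition znorm2sq :: "nat \<Rightarrow> (nat \<Rightarrow> complex) \<Rightarrow> real" where
  "znorm2sq k h = Re (zinner k h h)"

definition zhat :: "nat \<Rightarrow> (nat \<Rightarrow> complex) \<Rightarrow> nat \<Rightarrow> complex" where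
  "zhat k h b = zinner k h (chi k b)"

definition zrestrict :: "nat \<Rightarrow> nat set \<Rightarrow> (nat \<Rightarrow> complex) \<Rightarrow> (nat \<Rightarrow> complex)" where
  "zrestrict k G h = (\<lambda>x. \<Sum>b\<in>G. zhat k h b * chi k b x)"

definition cycabs :: "nat \<Rightarrow> real \<Rightarrow> real" where
  "cycabs k x = Inf {\<bar>x - real k * of_int z\<bar> | z. True}"

end

theory Submission
  imports Defs "HOL-Analysis.Analysis"
begin

text \<open>By Parseval, the error is the Fourier mass of \<open>g\<close> outside \<open>\<Gamma>'\<close>. Each coefficient
  \<open>\<widehat>g(\<beta>)\<close> is a geometric sum of \<open>\<ell>\<close> terms with ratio \<open>w = e(\<alpha>/n - \<beta>/m)\<close>, so
  \<open>|\<widehat>g(\<beta>)| \<le> 2/(m|1 - w|)\<close>, and Jordan's inequality gives \<open>|1 - w| \<ge> 4 min(y, m - y)/m\<close>,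
  where \<open>y \<in> [0, m)\<close> represents \<open>\<beta> - (m/n)\<alpha>\<close> modulo \<open>m\<close>. Hence
  \<open>|\<widehat>g(\<beta>)|\<^sup>2 \<le> (1/y\<^sup>2 + 1/(m - y)\<^sup>2)/4\<close>. Outside \<open>\<Gamma>'\<close> both \<open>y\<close> and \<open>m - y\<close> exceed
  \<open>R = r + 1\<close>, the values \<open>y\<close> for distinct \<open>\<beta>\<close> are 1-separated, and a sum of \<open>1/v\<^sup>2\<close> over
  1-separated reals \<open>v > R\<close> is at most \<open>1/(R - 1) = 2\<epsilon>\<close>.\<close>

lemma Jordan_inequality:
  fixes u :: real assumes "0 \<le> u" "u \<le> pi/2" shows "2 * u / pi \<le> sin u"
proof -
  have convex: "convex_on {0..pi/2} (\<lambda>x. - sin x)"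
    by (rule convex_on_realI[where f' = "\<lambda>x. - cos x"])
       (auto intro!: derivative_eq_intros cos_monotone_0_pi_le)
  define t where "t = 2 * u / pi"
  have t: "0 \<le> t" "t \<le> 1" using assms pi_gt_zero by (auto simp: t_def field_simps)
  have "- sin ((1 - t) *\<^sub>R 0 + t *\<^sub>R (pi/2)) \<le> (1 - t) * (- sin 0) + t * (- sin (pi/2))"
    by (rule convex_onD[OF convex]) (use t in auto)
  moreover have "(1 - t) *\<^sub>R 0 + t *\<^sub>R (pi/2) = u" by (simp add: t_def)
  ultimately show ?thesis by (simp add: t_def)
qed

lemma sin_pi_mult_ge:
  fixes t :: real assumes "0 \<le> t" "t \<le> 1" shows "2 * min t (1 - t) \<le> sin (pi * t)"
proof (cases "t \<le> 1/2")
  case True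
  then show ?thesis using Jordan_inequality[of "pi * t"] assms by (simp add: min_def)
next
  case False
  have "sin (pi * t) = sin (pi * (1 - t))" by (simp add: right_diff_distrib)
  then show ?thesis using Jordan_inequality[of "pi * (1 - t)"] assms False by (simp add: min_def)
qed

lemma norm_1_minus_cis: "cmod (1 - cis s) = 2 * \<bar>sin (s / 2)\<bar>"
proof -
  have "(cmod (1 - cis s))^2 = (1 - cos s)^2 + (sin s)^2"
    by (simp add: cmod_power2)
  also have "\<dots> = 2 - 2 * cos s"
    using sin_cos_squared_add[of s] by (simp add: power2_eq_square algebra_simps)
  also have "cos s = 1 - 2 * (sin (s / 2))^2"
    using cos_double_sin[of "s / 2"] by simp
  finally have "(cmod (1 - cis s))^2 = (2 * \<bar>sin (s / 2)\<bar>)^2"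
    by (simp add: power2_eq_square)
  then show ?thesis by (subst (asm) power2_eq_iff_nonneg) auto
qed

lemma norm_1_minus_cis_ge:
  fixes t :: real assumes "0 \<le> t" "t \<le> 1"
  shows "4 * min t (1 - t) \<le> cmod (1 - cis (2 * pi * t))"
  using sin_pi_mult_ge[OF assms] by (simp add: norm_1_minus_cis)

lemma norm_sum_power_le:
  fixes w :: complex assumes "cmod w = 1" "w \<noteq> 1"
  shows "cmod (\<Sum>x<l. w ^ x) \<le> 2 / cmod (1 - w)"
proof -
  have "cmod (1 - w ^ l) \<le> 2"
    using norm_triangle_ineq4[of 1 "w ^ l"] by (simp add: norm_power assms(1))
  then show ?thesis
    using assms(2) by (simp add: sum_gp_strict norm_divide divide_right_mono)
qed

lemma chi_eq_cis: "chi k a x = cis (2 * pi * a * x / k)"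
  by (simp add: chi_def cis_conv_exp mult_ac)

lemma chi_commute: "chi k a x = chi k x a"
  unfolding chi_def by (simp add: mult_ac)

lemma sum_cis_int_multiple:
  assumes "0 < m"
  shows "(\<Sum>x<m. cis (2 * pi * of_int k * real x / m)) = (if int m dvd k then of_nat m else 0)"
proof -
  define z where "z = cis (2 * pi * of_int k / m)"
  have powers: "cis (2 * pi * of_int k * x / m) = z ^ x" for x :: nat
    unfolding z_def Complex.DeMoivre by (simp add: mult_ac)
  have "z = 1 \<longleftrightarrow> int m dvd k"
  proof
    assume "z = 1"
    then obtain q :: int where "2 * pi * of_int k / m = 2 * pi * of_int q"
      by (auto simp: z_def complex_eq_iff cos_one_2pi_int)
    then have "real_of_int k = of_int (q * int m)" using assms by (simp add: field_simps)
    then show "int m dvd k" by (metis dvd_triv_right of_int_eq_iff)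
  next
    assume "int m dvd k"
    then obtain q where "k = int m * q" by (auto elim: dvdE)
    then have "2 * pi * of_int k / m = 2 * pi * of_int q" using assms by simp
    then show "z = 1" by (simp add: z_def)
  qed
  moreover have "z ^ m = 1"
  proof -
    have "real m * (2 * pi * of_int k / m) = 2 * pi * of_int k" using assms by simp
    then show ?thesis by (simp add: z_def Complex.DeMoivre)
  qed
  ultimately show ?thesis by (simp add: powers sum_gp_strict)
qed

lemma chi_mult_cnj: "chi k a x * cnj (chi l b x) = cis (2 * pi * (a / k - b / l) * x)"
  by (simp add: chi_eq_cis cis_cnj cis_mult algebra_simps diff_divide_distrib)

lemma chi_orthogonal:
  assumes "a < m" "b < m"
  shows "(\<Sum>x<m. chi m a x * cnj (chi m b x)) = (if a = b then of_nat m else 0)"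
proof -
  have m: "0 < m" using assms by simp
  have summand: "chi m a x * cnj (chi m b x) = cis (2 * pi * of_int (int a - int b) * real x / m)" for x
    by (simp add: chi_mult_cnj diff_divide_distrib[symmetric])
  have dvd: "int m dvd (int a - int b) \<longleftrightarrow> a = b"
    using assms dvd_imp_le_int[of "int a - int b" "int m"] by (cases "a = b") auto
  show ?thesis by (simp only: summand sum_cis_int_multiple[OF m] dvd)
qed

lemma zinner_self_eq_sum_zhat:
  assumes "0 < m"
  shows "zinner m h h = (\<Sum>b<m. zhat m h b * cnj (zhat m h b))"
proof -
  have expand: "zhat m h b * cnj (zhat m h b)
      = (1 / of_nat m)^2 * (\<Sum>x<m. \<Sum>y<m. h x * cnj (h y) * (chi m y b * cnj (chi m x b)))" for b
    by (simp add: zhat_def zinner_def sum_product chi_commute power2_eq_square mult_ac)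
  have swap: "(\<Sum>b<m. \<Sum>x<m. \<Sum>y<m. F b x y) = (\<Sum>x<m. \<Sum>y<m. \<Sum>b<m. F b x y)"
    for F :: "nat \<Rightarrow> nat \<Rightarrow> nat \<Rightarrow> complex"
    by (subst sum.swap) (rule sum.cong[OF refl], rule sum.swap)
  have "(\<Sum>b<m. zhat m h b * cnj (zhat m h b))
      = (1 / of_nat m)^2 * (\<Sum>x<m. \<Sum>y<m. h x * cnj (h y) * (\<Sum>b<m. chi m y b * cnj (chi m x b)))"
    by (simp only: expand sum_distrib_left[symmetric] swap)
  also have "\<dots> = (1 / of_nat m)^2 * (\<Sum>x<m. h x * cnj (h x) * of_nat m)"
    by (simp add: chi_orthogonal if_distrib sum.delta cong: if_cong)
  also have "\<dots> = zinner m h h"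
    using assms by (simp add: zinner_def sum_distrib_left power2_eq_square field_simps)
  finally show ?thesis ..
qed

lemma znorm2sq_eq_sum_zhat:
  assumes "0 < m"
  shows "znorm2sq m h = (\<Sum>b<m. (cmod (zhat m h b))^2)"
  by (simp add: znorm2sq_def zinner_self_eq_sum_zhat[OF assms] complex_mult_cnj cmod_power2 Re_sum)

lemma zhat_zrestrict:
  assumes "\<Gamma> \<subseteq> {..<m}" "\<beta> < m"
  shows "zhat m (zrestrict m \<Gamma> h) \<beta> = (if \<beta> \<in> \<Gamma> then zhat m h \<beta> else 0)"
proof -
  have "zhat m (zrestrict m \<Gamma> h) \<beta>
      = (\<Sum>b\<in>\<Gamma>. zhat m h b * ((1 / of_nat m) * (\<Sum>x<m. chi m b x * cnj (chi m \<beta> x))))"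
    unfolding zhat_def[of m "zrestrict m \<Gamma> h"] zinner_def
    unfolding zrestrict_def
    by (simp add: sum_distrib_left sum_distrib_right sum.swap[of _ "{..<m}"] mult_ac)
  also have "\<dots> = (\<Sum>b\<in>\<Gamma>. if b = \<beta> then zhat m h \<beta> else 0)"
    using assms by (intro sum.cong refl) (auto simp: chi_orthogonal)
  also have "\<dots> = (if \<beta> \<in> \<Gamma> then zhat m h \<beta> else 0)"
    using finite_subset[OF assms(1)] by (simp add: sum.delta')
  finally show ?thesis .
qed

lemma znorm2sq_diff_zrestrict:
  assumes "0 < m" "\<Gamma> \<subseteq> {..<m}"
  shows "znorm2sq m (\<lambda>x. h x - zrestrict m \<Gamma> h x) = (\<Sum>b\<in>{..<m} - \<Gamma>. (cmod (zhat m h b))^2)"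
proof -
  have zhat_diff: "zhat m (\<lambda>x. h x - zrestrict m \<Gamma> h x) b = (if b \<in> \<Gamma> then 0 else zhat m h b)" if "b < m" for b
  proof -
    have "zhat m (\<lambda>x. h x - zrestrict m \<Gamma> h x) b = zhat m h b - zhat m (zrestrict m \<Gamma> h) b"
      by (simp add: zhat_def zinner_def sum_subtractf ring_distribs)
    then show ?thesis using zhat_zrestrict[OF assms(2) that] by simp
  qed
  have "znorm2sq m (\<lambda>x. h x - zrestrict m \<Gamma> h x)
      = (\<Sum>b<m. if b \<in> \<Gamma> then 0 else (cmod (zhat m h b))^2)"
    unfolding znorm2sq_eq_sum_zhat[OF assms(1)] by (intro sum.cong refl) (simp add: zhat_diff)
  also have "\<dots> = (\<Sum>b\<in>{..<m} - \<Gamma>. (cmod (zhat m h b))^2)"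
    by (simp add: sum.If_cases Diff_eq)
  finally show ?thesis .
qed

lemma zhat_truncated_chi:
  assumes "l \<le> m"
  shows "zhat m (\<lambda>x. if x < l then chi n \<alpha> x else 0) \<beta>
    = (1 / of_nat m) * (\<Sum>x<l. cis (2 * pi * (\<alpha> / n - \<beta> / m)) ^ x)"
proof -
  have "(\<Sum>x<m. (if x < l then chi n \<alpha> x else 0) * cnj (chi m \<beta> x))
      = (\<Sum>x<m. if x \<in> {..<l} then cis (2 * pi * (\<alpha> / n - \<beta> / m)) ^ x else 0)"
    by (intro sum.cong) (simp_all add: chi_mult_cnj Complex.DeMoivre mult_ac)
  also have "\<dots> = (\<Sum>x<l. cis (2 * pi * (\<alpha> / n - \<beta> / m)) ^ x)"
    using assms by (simp only: sum.inter_restrict[symmetric] finite_lessThan Int_absorb1 lessThan_subset_iff)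
  finally show ?thesis by (simp add: zhat_def zinner_def)
qed

lemma norm_zhat_truncated_chi_le:
  fixes l m n \<alpha> \<beta> :: nat and e :: int and y :: real
  assumes "l \<le> m" "\<beta> < m"
    and y: "y = real \<beta> - real m / real n * real \<alpha> + real m * of_int e"
    and y_bounds: "0 < y" "y < m"
  shows "cmod (zhat m (\<lambda>x. if x < l then chi n \<alpha> x else 0) \<beta>) \<le> 1 / (2 * min y (m - y))"
proof -
  have m: "0 < m" using assms by simp
  define w where "w = cis (2 * pi * (\<alpha> / n - \<beta> / m))"
  have zhat: "zhat m (\<lambda>x. if x < l then chi n \<alpha> x else 0) \<beta> = (1 / of_nat m) * (\<Sum>x<l. w ^ x)"
    unfolding w_def by (rule zhat_truncated_chi[OF assms(1)])
  define t where "t = 1 - y / m"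
  have t: "0 < t" "t < 1" using assms m by (auto simp: t_def field_simps)
  have "2 * pi * (\<alpha> / n - \<beta> / m) + 2 * pi * of_int (1 - e) = 2 * pi * t"
    using m unfolding t_def y by (simp add: field_simps)
  then have w: "w = cis (2 * pi * t)"
    by (metis w_def cis_mult mult_1_right cis_multiple_2pi Ints_of_int)
  have "4 * min t (1 - t) \<le> cmod (1 - w)"
    unfolding w using norm_1_minus_cis_ge t by simp
  moreover have "4 * min t (1 - t) = 4 / m * min y (m - y)"
    using m by (simp add: t_def min_def field_simps)
  ultimately have gap: "4 / m * min y (m - y) \<le> cmod (1 - w)" by simp
  have pos: "0 < 4 / m * min y (m - y)" using assms m by simp
  have "w \<noteq> 1" "cmod w = 1" using gap pos by (auto simp: w)
  then have sum_le: "cmod (\<Sum>x<l. w ^ x) \<le> 2 / cmod (1 - w)" by (rule norm_sum_power_le[rotated])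
  have "cmod (zhat m (\<lambda>x. if x < l then chi n \<alpha> x else 0) \<beta>) = cmod (\<Sum>x<l. w ^ x) / m"
    unfolding zhat by (simp add: norm_mult norm_divide)
  also have "\<dots> \<le> 2 / cmod (1 - w) / m"
    using sum_le by (rule divide_right_mono) simp
  also have "\<dots> \<le> 2 / (4 / m * min y (m - y)) / m"
    using gap pos m y_bounds \<open>w \<noteq> 1\<close> by (intro divide_right_mono divide_left_mono mult_pos_pos) simp_all
  also have "\<dots> = 1 / (2 * min y (m - y))"
    using m by (simp add: field_simps)
  finally show ?thesis .
qed

definition inverse_square_above :: "real \<Rightarrow> real \<Rightarrow> real" where
  "inverse_square_above R v = (if R < v then 1 / v^2 else 0)"

text \<open>Induction removing the largest value \<open>v\<close>: the others are at most \<open>v - 1\<close> and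
  \<open>1/v\<^sup>2 \<le> 1/(v - 1) - 1/v\<close>, so the bounds telescope.\<close>

lemma sum_inverse_square_separated_le_bound:
  fixes v :: "'a \<Rightarrow> real"
  assumes "finite I" "1 < R"
    and "\<And>i j. i \<in> I \<Longrightarrow> j \<in> I \<Longrightarrow> i \<noteq> j \<Longrightarrow> 1 \<le> \<bar>v i - v j\<bar>"
    and "R - 1 \<le> T" "\<And>i. i \<in> I \<Longrightarrow> v i \<le> T"
  shows "(\<Sum>i\<in>I. inverse_square_above R (v i)) \<le> 1 / (R - 1) - 1 / T"
  using assms(1,3-5)
proof (induction I arbitrary: T rule: finite_ranking_induct[where f = v])
  case empty
  then show ?case using assms(2) by (auto intro!: divide_left_mono)
next
  case (insert x S)
  show ?case
  proof (cases "x \<in> S")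
    case True
    then show ?thesis using insert by (simp add: insert_absorb)
  next
    case False
    have below: "v i \<le> v x - 1" if "i \<in> S" for i
      using insert.prems(1)[of i x] insert.hyps(2)[OF that] that False by fastforce
    have IH: "(\<Sum>i\<in>S. inverse_square_above R (v i)) \<le> 1 / (R - 1) - 1 / max (R - 1) (v x - 1)"
      using below insert.prems(1) by (intro insert.IH) (auto simp: le_max_iff_disj)
    have "v x \<le> T" using insert.prems(3) by simp
    show ?thesis
    proof (cases "R < v x")
      case True
      have "1 / (v x)^2 \<le> 1 / (v x - 1) - 1 / v x"
        using True assms(2) by (simp add: field_simps power2_eq_square)
      moreover have "1 / T \<le> 1 / v x"
        using True assms(2) \<open>v x \<le> T\<close> by (intro divide_left_mono) auto
      ultimately show ?thesis
        using IH True \<open>x \<notin> S\<close> insert.hyps(1) by (simp add: inverse_square_above_def max_def)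
    next
      case False
      have "max (R - 1) (v x - 1) = R - 1" using False by simp
      moreover have "1 / T \<le> 1 / (R - 1)"
        using insert.prems(2) assms(2) by (intro divide_left_mono) auto
      ultimately show ?thesis
        using IH False \<open>x \<notin> S\<close> insert.hyps(1) by (simp add: inverse_square_above_def)
    qed
  qed
qed

lemma sum_inverse_square_separated_le:
  fixes v :: "'a \<Rightarrow> real"
  assumes "finite I" "1 < R"
    and "\<And>i j. i \<in> I \<Longrightarrow> j \<in> I \<Longrightarrow> i \<noteq> j \<Longrightarrow> 1 \<le> \<bar>v i - v j\<bar>"
  shows "(\<Sum>i\<in>I. inverse_square_above R (v i)) \<le> 1 / (R - 1)"
proof -
  define T where "T = R - 1 + (\<Sum>i\<in>I. \<bar>v i\<bar>)"
  have "v i \<le> T" if "i \<in> I" for i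
    using member_le_sum[OF that _ assms(1), of "\<lambda>i. \<bar>v i\<bar>"] assms(2) unfolding T_def by auto
  moreover have "R - 1 \<le> T" unfolding T_def by (simp add: sum_nonneg)
  ultimately have "(\<Sum>i\<in>I. inverse_square_above R (v i)) \<le> 1 / (R - 1) - 1 / T"
    using assms(3) by (intro sum_inverse_square_separated_le_bound[OF assms(1,2)]) auto
  moreover have "0 < 1 / T" using \<open>R - 1 \<le> T\<close> assms(2) by simp
  ultimately show ?thesis by linarith
qed

lemma cycabs_le: "cycabs k x \<le> \<bar>x - real k * of_int z\<bar>"
  unfolding cycabs_def by (rule cInf_lower) (auto intro: bdd_belowI[of _ 0])

text \<open>For \<open>0 \<le> c < m\<close>: the representative in \<open>[0, m)\<close> of \<open>b - c\<close> modulo \<open>m\<close>.\<close>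

definition cyc_offset :: "nat \<Rightarrow> real \<Rightarrow> nat \<Rightarrow> real" where
  "cyc_offset m c b = real b - c + (if c \<le> real b then 0 else real m)"

lemma cyc_offset_separated:
  assumes "b < m" "b' < m" "b \<noteq> b'"
  shows "1 \<le> \<bar>cyc_offset m c b - cyc_offset m c b'\<bar>"
proof -
  have "real b + 1 \<le> real b' \<or> real b' + 1 \<le> real b"
    using assms(3) by linarith
  then show ?thesis
    using assms(1,2) by (auto simp: cyc_offset_def)
qed

lemma cycabs_le_cyc_offset:
  assumes "0 \<le> c" "c < real m" "b < m"
  shows "cycabs m (c - real b) \<le> min (cyc_offset m c b) (m - cyc_offset m c b)"
proof (cases "c \<le> real b")
  case True
  have "cycabs m (c - real b) \<le> \<bar>c - real b - real m * of_int 0\<bar>"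
    and "cycabs m (c - real b) \<le> \<bar>c - real b - real m * of_int (- 1)\<bar>"
    by (rule cycabs_le)+
  then show ?thesis using True assms by (simp add: cyc_offset_def)
next
  case False
  have "cycabs m (c - real b) \<le> \<bar>c - real b - real m * of_int 1\<bar>"
    and "cycabs m (c - real b) \<le> \<bar>c - real b - real m * of_int 0\<bar>"
    by (rule cycabs_le)+
  then show ?thesis using False assms by (simp add: cyc_offset_def)
qed

lemma norm_zhat_truncated_chi_sq_le:
  fixes l m n \<alpha> \<beta> :: nat and R y :: real
  defines "y \<equiv> cyc_offset m (real m / real n * real \<alpha>) \<beta>"
  assumes "l \<le> m" "\<alpha> < n" "\<beta> < m" "0 \<le> R"
    and far: "R < cycabs m (real m / real n * real \<alpha> - real \<beta>)"
  shows "(cmod (zhat m (\<lambda>x. if x < l then chi n \<alpha> x else 0) \<beta>))^2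
    \<le> (inverse_square_above R y + inverse_square_above R (m - y)) / 4"
proof -
  define c where "c = real m / real n * real \<alpha>"
  have c: "0 \<le> c" "c < real m"
    using assms(2-4) by (simp_all add: c_def field_simps)
  have y_far: "R < y" "R < m - y"
    using cycabs_le_cyc_offset[OF c assms(4)] far by (auto simp: y_def c_def)
  have "y = real \<beta> - real m / real n * real \<alpha> + real m * of_int (if c \<le> real \<beta> then 0 else 1)"
    by (simp add: y_def cyc_offset_def c_def)
  then have "cmod (zhat m (\<lambda>x. if x < l then chi n \<alpha> x else 0) \<beta>) \<le> 1 / (2 * min y (m - y))"
    using y_far assms(2,4,5) by (intro norm_zhat_truncated_chi_le) auto
  then have "(cmod (zhat m (\<lambda>x. if x < l then chi n \<alpha> x else 0) \<beta>))^2 \<le> (1 / (2 * min y (m - y)))^2"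
    by (intro power_mono) auto
  also have "\<dots> = (1 / (min y (m - y))^2) / 4"
    by (simp add: power2_eq_square)
  also have "\<dots> \<le> (inverse_square_above R y + inverse_square_above R (m - y)) / 4"
    using y_far assms(5) by (cases "y \<le> m - y") (simp_all add: inverse_square_above_def min_def)
  finally show ?thesis .
qed

theorem proposition4p1:
  fixes m n \<alpha> :: nat and \<epsilon> :: real and g :: "nat \<Rightarrow> complex" and \<Gamma> :: "nat set"
  assumes "0 < m" and "0 < n" and "0 < \<epsilon>" and "\<alpha> < n"
    and "g = (\<lambda>x. if x < min n m then chi n \<alpha> x else 0)"
    and "\<Gamma> = {\<beta>. \<beta> < m \<and>
           cycabs m (real m / real n * real \<alpha> - real \<beta>) \<le> 1 / (2 * \<epsilon>) + 1}"
  shows "znorm2sq m (\<lambda>x. g x - zrestrict m \<Gamma> g x) \<le> \<epsilon>"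
proof -
  define R where "R = 1 / (2 * \<epsilon>) + 1"
  define y where "y = cyc_offset m (real m / real n * real \<alpha>)"
  define bound where "bound = (\<lambda>b. (inverse_square_above R (y b) + inverse_square_above R (m - y b)) / 4)"
  have "1 < R" using assms(3) by (simp add: R_def)
  have "znorm2sq m (\<lambda>x. g x - zrestrict m \<Gamma> g x) = (\<Sum>b\<in>{..<m} - \<Gamma>. (cmod (zhat m g b))^2)"
    using assms(1,6) by (intro znorm2sq_diff_zrestrict) auto
  also have "\<dots> \<le> (\<Sum>b\<in>{..<m} - \<Gamma>. bound b)"
  proof (rule sum_mono)
    fix b assume "b \<in> {..<m} - \<Gamma>"
    then have "b < m" "R < cycabs m (real m / real n * real \<alpha> - real b)"
      using assms(6) by (auto simp: R_def)
    then show "(cmod (zhat m g b))^2 \<le> bound b"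
      unfolding assms(5) bound_def y_def using assms(4) \<open>1 < R\<close>
      by (intro norm_zhat_truncated_chi_sq_le) auto
  qed
  also have "\<dots> \<le> (\<Sum>b<m. bound b)"
    by (intro sum_mono2) (auto simp: bound_def inverse_square_above_def)
  also have "\<dots> = ((\<Sum>b<m. inverse_square_above R (y b)) + (\<Sum>b<m. inverse_square_above R (m - y b))) / 4"
    unfolding bound_def by (simp only: sum_divide_distrib[symmetric] sum.distrib)
  also have "\<dots> \<le> (1 / (R - 1) + 1 / (R - 1)) / 4"
    using cyc_offset_separated \<open>1 < R\<close> unfolding y_def
    by (intro divide_right_mono add_mono sum_inverse_square_separated_le) (auto simp: abs_minus_commute)
  also have "\<dots> = \<epsilon>" using assms(3) by (simp add: R_def)
  finally show ?thesis .
qed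

end
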